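(* Let $\{X_\sigma,\pi^\sigma_\varrho,\Sigma\}$ be an inverse system of topological spaces such that all bonding maps $\pi^\sigma_\varrho$ are skeletal and all limit projections $\pi_\sigma:\varprojlim\{X_\sigma,\pi^\sigma_\varrho,\Sigma\}\to X_\sigma$ are onto. Then every projection $\pi_\sigma$ is skeletal.
   Context: A continuous surjection $f:X\to Y$ is skeletal if for every non-empty open $U\subseteq X$ the closure of $f[U]$ has non-empty interior. *)

theory Defs
  imports "HOL-Analysis.Analysis"
begin

definition skeletal :: "'a topology \<Rightarrow> 'b topology \<Rightarrow> ('a \<Rightarrow> 'b) \<Rightarrow> bool" where
  "skeletal X Y f \<longleftrightarrow> continuous_map X Y f \<and> f ` topspace X = topspace Y \<and>
     (\<forall>U. openin X U \<and> U \<noteq> {} \<longrightarrow> Y interior_of (Y closure_of (f ` U)) \<noteq> {})"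

definition directed_set :: "'i set \<Rightarrow> ('i \<Rightarrow> 'i \<Rightarrow> bool) \<Rightarrow> bool" where
  "directed_set S le \<longleftrightarrow>
     (\<forall>a\<in>S. le a a) \<and>
     (\<forall>a\<in>S. \<forall>b\<in>S. \<forall>c\<in>S. le a b \<and> le b c \<longrightarrow> le a c) \<and>
     (\<forall>a\<in>S. \<forall>b\<in>S. \<exists>c\<in>S. le a c \<and> le b c)"

definition inverse_system ::
  "'i set \<Rightarrow> ('i \<Rightarrow> 'i \<Rightarrow> bool) \<Rightarrow> ('i \<Rightarrow> 'a topology) \<Rightarrow> ('i \<Rightarrow> 'i \<Rightarrow> 'a \<Rightarrow> 'a) \<Rightarrow> bool" where
  "inverse_system S le X p \<longleftrightarrow> directed_set S le \<and>
     (\<forall>s\<in>S. \<forall>r\<in>S. le r s \<longrightarrow> continuous_map (X s) (X r) (p s r)) \<and>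
     (\<forall>s\<in>S. \<forall>x\<in>topspace (X s). p s s x = x) \<and>
     (\<forall>s\<in>S. \<forall>r\<in>S. \<forall>t\<in>S. le t r \<and> le r s \<longrightarrow>
        (\<forall>x\<in>topspace (X s). p r t (p s r x) = p s t x))"

definition inv_limit ::
  "'i set \<Rightarrow> ('i \<Rightarrow> 'i \<Rightarrow> bool) \<Rightarrow> ('i \<Rightarrow> 'a topology) \<Rightarrow> ('i \<Rightarrow> 'i \<Rightarrow> 'a \<Rightarrow> 'a) \<Rightarrow> ('i \<Rightarrow> 'a) topology" where
  "inv_limit S le X p = subtopology (product_topology X S)
     {x \<in> topspace (product_topology X S). \<forall>s\<in>S. \<forall>r\<in>S. le r s \<longrightarrow> p s r (x s) = x r}"

end

theory Submission
  imports Defs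
begin

text \<open>A basic open set of the inverse limit constrains only finitely many coordinates; by
  directedness they all lie below a single index u, so the basic set contains a cylinder
  over an open set of X u. Surjectivity of the limit projection onto X u then shows that the
  bonding map from X u to X s carries this open set into the projection of the given open
  set, and skeletality of the bonding map finishes the argument.\<close>

lemma directed_set_finite_upper_bound:
  assumes dir: "directed_set S le" and "finite F" "F \<subseteq> S" "s \<in> S"
  shows "\<exists>u\<in>S. le s u \<and> (\<forall>t\<in>F. le t u)"
  using assms(2,3)
proof (induction F)
  case empty
  then show ?case using dir \<open>s \<in> S\<close> unfolding directed_set_def by blast
next
  case (insert a F)
  then obtain u where u: "u \<in> S" "le s u" "\<forall>t\<in>F. le t u" by auto
  with dir insert.prems obtain c where c: "c \<in> S" "le u c" "le a c"
    unfolding directed_set_def by blast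
  have trans: "le t c" if "t \<in> S" "le t u" for t
    using dir that u(1) c(1,2) unfolding directed_set_def by blast
  have "le s c" using trans \<open>s \<in> S\<close> u(2) by blast
  moreover have "\<forall>t\<in>F. le t c" using trans u(3) insert.prems by blast
  ultimately show ?case using c by blast
qed

lemma topspace_inv_limit:
  "topspace (inv_limit S le X p) =
     {x \<in> topspace (product_topology X S). \<forall>s\<in>S. \<forall>r\<in>S. le r s \<longrightarrow> p s r (x s) = x r}"
  unfolding inv_limit_def by auto

lemma continuous_map_inv_limit_projection:
  "s \<in> S \<Longrightarrow> continuous_map (inv_limit S le X p) (X s) (\<lambda>x. x s)"
  unfolding inv_limit_def
  by (intro continuous_map_from_subtopology continuous_map_product_projection)

lemma inv_limit_open_contains_cylinder:
  assumes sys: "inverse_system S le X p" and s: "s \<in> S"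
    and U: "openin (inv_limit S le X p) U" and x: "x \<in> U"
  obtains u W where "u \<in> S" "le s u" "openin (X u) W" "x u \<in> W"
    "\<And>y. y \<in> topspace (inv_limit S le X p) \<Longrightarrow> y u \<in> W \<Longrightarrow> y \<in> U"
proof -
  let ?T = "topspace (inv_limit S le X p)"
  have dir: "directed_set S le"
    and cont: "\<And>s r. s \<in> S \<Longrightarrow> r \<in> S \<Longrightarrow> le r s \<Longrightarrow> continuous_map (X s) (X r) (p s r)"
    using sys unfolding inverse_system_def by blast+
  obtain V where V: "openin (product_topology X S) V" "U = ?T \<inter> V"
    using U unfolding inv_limit_def openin_subtopology by auto
  obtain A where A: "finite {i \<in> S. A i \<noteq> topspace (X i)}" "\<forall>i\<in>S. openin (X i) (A i)"
      "x \<in> Pi\<^sub>E S A" "Pi\<^sub>E S A \<subseteq> V"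
    using V x unfolding openin_product_topology_alt by blast
  define F where "F = {i \<in> S. A i \<noteq> topspace (X i)}"
  have F: "finite F" "F \<subseteq> S" using A(1) unfolding F_def by auto
  obtain u where u: "u \<in> S" "le s u" "\<forall>t\<in>F. le t u"
    using directed_set_finite_upper_bound[OF dir F s] by blast
  have thread: "p u t (y u) = y t" if "y \<in> ?T" "t \<in> F" for y t
    using that u F(2) unfolding topspace_inv_limit by blast
  define W where "W = (\<Inter>t\<in>F. {z \<in> topspace (X u). p u t z \<in> A t}) \<inter> topspace (X u)"
  show thesis
  proof
    show "openin (X u) W"
      unfolding W_def
    proof (rule openin_INT[OF F(1)])
      fix t assume "t \<in> F"
      with F(2) u A(2) have "continuous_map (X u) (X t) (p u t)" "openin (X t) (A t)"
        by (auto intro: cont)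
      then show "openin (X u) {z \<in> topspace (X u). p u t z \<in> A t}"
        by (rule openin_continuous_map_preimage)
    qed
    have "x \<in> ?T" using x V by blast
    then have "x u \<in> topspace (X u)" "\<forall>t\<in>F. p u t (x u) \<in> A t"
      using A(3) u(1) F(2) thread unfolding topspace_inv_limit by (auto simp: PiE_iff)
    then show "x u \<in> W" unfolding W_def by blast
  next
    fix y assume y: "y \<in> ?T" "y u \<in> W"
    then have ytop: "y \<in> (\<Pi>\<^sub>E i\<in>S. topspace (X i))" unfolding topspace_inv_limit by simp
    have "y i \<in> A i" if i: "i \<in> S" for i
    proof (cases "i \<in> F")
      case True
      with y(2) have "p u i (y u) \<in> A i" unfolding W_def by blast
      then show ?thesis using thread[OF y(1) True] by simp
    next
      case False
      with i have "A i = topspace (X i)" unfolding F_def by blast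
      with ytop i show ?thesis by (simp add: PiE_iff)
    qed
    with ytop have "y \<in> Pi\<^sub>E S A" by (simp add: PiE_iff)
    with A(4) V(2) y(1) show "y \<in> U" by blast
  qed (use u in auto)
qed

lemma bonding_image_subset_projection_image:
  assumes s: "s \<in> S" and u: "u \<in> S" "le s u" and W: "W \<subseteq> topspace (X u)"
    and onto: "(\<lambda>x. x u) ` topspace (inv_limit S le X p) = topspace (X u)"
    and cyl: "\<And>y. y \<in> topspace (inv_limit S le X p) \<Longrightarrow> y u \<in> W \<Longrightarrow> y \<in> U"
  shows "p u s ` W \<subseteq> (\<lambda>x. x s) ` U"
proof
  fix z assume "z \<in> p u s ` W"
  then obtain w where w: "w \<in> W" "z = p u s w" by blast
  with W have "w \<in> (\<lambda>x. x u) ` topspace (inv_limit S le X p)" unfolding onto by blast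
  then obtain y where y: "y \<in> topspace (inv_limit S le X p)" "y u = w" by blast
  have "p u s (y u) = y s" using y(1) u s unfolding topspace_inv_limit by blast
  with y w have "y \<in> U" "y s = z" using cyl by auto
  then show "z \<in> (\<lambda>x. x s) ` U" by blast
qed

theorem proposition3:
  fixes S :: "'i set" and le :: "'i \<Rightarrow> 'i \<Rightarrow> bool"
    and X :: "'i \<Rightarrow> 'a topology" and p :: "'i \<Rightarrow> 'i \<Rightarrow> 'a \<Rightarrow> 'a"
  assumes "inverse_system S le X p"
    and "\<forall>s\<in>S. \<forall>r\<in>S. le r s \<longrightarrow> skeletal (X s) (X r) (p s r)"
    and "\<forall>s\<in>S. (\<lambda>x. x s) ` topspace (inv_limit S le X p) = topspace (X s)"
  shows "\<forall>s\<in>S. skeletal (inv_limit S le X p) (X s) (\<lambda>x. x s)"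
proof
  fix s assume s: "s \<in> S"
  let ?L = "inv_limit S le X p"
  have "X s interior_of (X s closure_of ((\<lambda>x. x s) ` U)) \<noteq> {}"
    if U: "openin ?L U" "x \<in> U" for U x
  proof -
    obtain u W where u: "u \<in> S" "le s u" and W: "openin (X u) W" "x u \<in> W"
      and cyl: "\<And>y. y \<in> topspace ?L \<Longrightarrow> y u \<in> W \<Longrightarrow> y \<in> U"
      using inv_limit_open_contains_cylinder[OF assms(1) s U] by blast
    have "p u s ` W \<subseteq> (\<lambda>x. x s) ` U"
      using s u openin_subset[OF W(1)] assms(3)[rule_format, OF u(1)] cyl
      by (rule bonding_image_subset_projection_image)
    then have "X s interior_of (X s closure_of (p u s ` W))
        \<subseteq> X s interior_of (X s closure_of ((\<lambda>x. x s) ` U))"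
      by (intro interior_of_mono closure_of_mono)
    moreover have "skeletal (X u) (X s) (p u s)" using assms(2) u s by blast
    then have "X s interior_of (X s closure_of (p u s ` W)) \<noteq> {}"
      using W unfolding skeletal_def by blast
    ultimately show ?thesis by blast
  qed
  with continuous_map_inv_limit_projection[OF s] assms(3) s
  show "skeletal ?L (X s) (\<lambda>x. x s)"
    unfolding skeletal_def by blast
qed

end
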